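(* For every $N$-partite pure state $\left|\psi\right\rangle\in\mathbb{C}^{d_1}\otimes\cdots\otimes\mathbb{C}^{d_N}$, $$E_{MB}(\left|\psi\right\rangle)\ \ge\ E_R(\left|\psi\right\rangle).$$ More precisely, if an adaptive local measurement scheme with product outcome vectors $|e_{\mathbf{i}}\rangle=|\phi^{(1)}_{i_1}\rangle\otimes\cdots\otimes|\phi^{(N)}_{i_N|i_1\dots i_{N-1}}\rangle$ has outcome distribution $\mathbf{p}$, then the fully separable state $\omega=\sum_{\mathbf{i}}p_{\mathbf{i}}|e_{\mathbf{i}}\rangle\langle e_{\mathbf{i}}|$ satisfies $-\langle\psi|\log_2\omega|\psi\rangle=H(\mathbf{p})$.
   Context: Entanglement measurement bound (EMB). Let $\left|\psi\right\rangle$ be a unit vector in $\mathcal{H}_1\otimes\cdots\otimes\mathcal{H}_N$, $\mathcal{H}_j=\mathbb{C}^{d_j}$. An adaptive local measurement scheme consists of: an ordering $\pi$ of the parties $\{1,\dots,N\}$; an orthonormal basis $\{|\phi^{(1)}_{i_1}\rangle\}_{i_1}$ of $\mathcal{H}_{\pi(1)}$; and, for each $k=2,\dots,N$ and each outcome history $(i_1,\dots,i_{k-1})$, an orthonormal basis $\{|\phi^{(k)}_{i_k|i_1\dots i_{k-1}}\rangle\}_{i_k}$ of $\mathcal{H}_{\pi(k)}$ (which may depend on the history). Its outcome distribution is $p_{i_1\dots i_N}=\big|\big(\langle\phi^{(1)}_{i_1}|\otimes\langle\phi^{(2)}_{i_2|i_1}|\otimes\cdots\otimes\langle\phi^{(N)}_{i_N|i_1\dots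 i_{N-1}}|\big)\left|\psi\right\rangle\big|^2$, where the $k$-th bra acts on the tensor factor of party $\pi(k)$. The EMB is $E_{MB}(\left|\psi\right\rangle)=\min H(\mathbf{p})$, where $H(\mathbf{p})=-\sum p_{i_1\dots i_N}\log_2 p_{i_1\dots i_N}$ is the Shannon entropy and the minimum is over all adaptive local measurement schemes (including all orderings of the parties). Relative entropy of entanglement: $E_R(\left|\psi\right\rangle)=\min_{\sigma}\big(-\langle\psi|\log_2\sigma|\psi\rangle\big)$, the minimum over all fully separable states $\sigma$ (convex combinations of $N$-fold product states $\sigma_1\otimes\cdots\otimes\sigma_N$), with the convention that the value is $+\infty$ if $\left|\psi\right\rangle\notin\mathrm{supp}\,\sigma$. *)

theory Defs
  imports "HOL-Analysis.Analysis"
begin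

text \<open>Parties are indexed by 0..N-1. A basis multi-index is a function x with x j < d j
  for j < N (extensional outside). Vectors are functions from multi-indices to complex numbers,
  operators are (matrix-entry) functions of two multi-indices.\<close>

definition tidx :: "nat \<Rightarrow> (nat \<Rightarrow> nat) \<Rightarrow> (nat \<Rightarrow> nat) set" where
  "tidx N d = PiE {..<N} (\<lambda>j. {..<d j})"

definition unit_vec :: "'i set \<Rightarrow> ('i \<Rightarrow> complex) \<Rightarrow> bool" where
  "unit_vec S v \<longleftrightarrow> (\<Sum>x\<in>S. (cmod (v x))\<^sup>2) = 1"

definition braket :: "'i set \<Rightarrow> ('i \<Rightarrow> complex) \<Rightarrow> ('i \<Rightarrow> complex) \<Rightarrow> complex" where
  "braket S u v = (\<Sum>x\<in>S. cnj (u x) * v x)"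

definition orthonormal_basis :: "'i set \<Rightarrow> ('i \<Rightarrow> 'i \<Rightarrow> complex) \<Rightarrow> bool" where
  "orthonormal_basis S b \<longleftrightarrow>
     (\<forall>k\<in>S. \<forall>l\<in>S. braket S (b k) (b l) = (if k = l then 1 else 0))"

definition density_matrix :: "'i set \<Rightarrow> ('i \<Rightarrow> 'i \<Rightarrow> complex) \<Rightarrow> bool" where
  "density_matrix S \<rho> \<longleftrightarrow>
     (\<forall>x\<in>S. \<forall>y\<in>S. \<rho> y x = cnj (\<rho> x y)) \<and>
     (\<forall>v. Re (\<Sum>x\<in>S. \<Sum>y\<in>S. cnj (v x) * \<rho> x y * v y) \<ge> 0) \<and>
     (\<Sum>x\<in>S. \<rho> x x) = 1"

definition fully_separable :: "nat \<Rightarrow> (nat \<Rightarrow> nat) \<Rightarrow> ((nat \<Rightarrow> nat) \<Rightarrow> (nat \<Rightarrow> nat) \<Rightarrow> complex) \<Rightarrow> bool" where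
  "fully_separable N d \<sigma> \<longleftrightarrow>
     (\<exists>(m::nat) (w::nat \<Rightarrow> real) (\<rho>::nat \<Rightarrow> nat \<Rightarrow> nat \<Rightarrow> nat \<Rightarrow> complex).
        (\<forall>k<m. w k \<ge> 0) \<and> (\<Sum>k<m. w k) = 1 \<and>
        (\<forall>k<m. \<forall>j<N. density_matrix {..<d j} (\<rho> k j)) \<and>
        (\<forall>x\<in>tidx N d. \<forall>y\<in>tidx N d.
            \<sigma> x y = (\<Sum>k<m. complex_of_real (w k) * (\<Prod>j<N. \<rho> k j (x j) (y j)))))"

text \<open>The quantity  - <psi| log_2 sigma |psi>, defined through a spectral decomposition
  sigma = sum_k lambda_k |v_k><v_k| (orthonormal eigenbasis v indexed by S):
  it is +infinity if psi has a component along an eigenvector with eigenvalue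
  lambda_k <= 0 (i.e. psi is not in the support), and otherwise
  sum_{lambda_k > 0} |<v_k|psi>|^2 (- log_2 lambda_k).\<close>
definition neg_log_qf :: "'i set \<Rightarrow> ('i \<Rightarrow> 'i \<Rightarrow> complex) \<Rightarrow> ('i \<Rightarrow> complex) \<Rightarrow> ereal" where
  "neg_log_qf S \<sigma> \<psi> =
     (let (v, lam) = (SOME (v, lam). orthonormal_basis S v \<and>
             (\<forall>x\<in>S. \<forall>y\<in>S. \<sigma> x y = (\<Sum>k\<in>S. complex_of_real (lam k) * v k x * cnj (v k y))))
      in if (\<exists>k\<in>S. lam k \<le> 0 \<and> braket S (v k) \<psi> \<noteq> 0) then \<infinity>
         else ereal (\<Sum>k\<in>{k\<in>S. lam k > 0}. (cmod (braket S (v k) \<psi>))\<^sup>2 * (- log 2 (lam k))))"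

definition E_R :: "nat \<Rightarrow> (nat \<Rightarrow> nat) \<Rightarrow> ((nat \<Rightarrow> nat) \<Rightarrow> complex) \<Rightarrow> ereal" where
  "E_R N d \<psi> = (INF \<sigma>\<in>{\<sigma>. fully_separable N d \<sigma>}. neg_log_qf (tidx N d) \<sigma> \<psi>)"

text \<open>A scheme is a pair (pi, phi): pi is an ordering of the parties (step k measures party pi k),
  and phi k h i is the i-th basis vector (a function of the local index x < d (pi k)) used at step k
  after outcome history h (a list of the k previous outcomes).\<close>
definition adaptive_scheme ::
  "nat \<Rightarrow> (nat \<Rightarrow> nat) \<Rightarrow> (nat \<Rightarrow> nat) \<Rightarrow> (nat \<Rightarrow> nat list \<Rightarrow> nat \<Rightarrow> nat \<Rightarrow> complex) \<Rightarrow> bool" where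
  "adaptive_scheme N d \<pi> \<phi> \<longleftrightarrow>
     bij_betw \<pi> {..<N} {..<N} \<and>
     (\<forall>k<N. \<forall>h. length h = k \<and> (\<forall>m<k. h ! m < d (\<pi> m)) \<longrightarrow>
        orthonormal_basis {..<d (\<pi> k)} (\<phi> k h))"

text \<open>Outcome tuples (i_1,...,i_N), indexed by step.\<close>
definition outcomes :: "nat \<Rightarrow> (nat \<Rightarrow> nat) \<Rightarrow> (nat \<Rightarrow> nat) \<Rightarrow> (nat \<Rightarrow> nat) set" where
  "outcomes N d \<pi> = PiE {..<N} (\<lambda>k. {..<d (\<pi> k)})"

text \<open>Product outcome vector |e_i> = |phi^(1)_{i_1}> x ... x |phi^(N)_{i_N|i_1...i_{N-1}}>,
  the k-th factor living on party pi k.\<close>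
definition outcome_vec ::
  "nat \<Rightarrow> (nat \<Rightarrow> nat) \<Rightarrow> (nat \<Rightarrow> nat list \<Rightarrow> nat \<Rightarrow> nat \<Rightarrow> complex) \<Rightarrow> (nat \<Rightarrow> nat) \<Rightarrow> (nat \<Rightarrow> nat) \<Rightarrow> complex" where
  "outcome_vec N \<pi> \<phi> i x = (\<Prod>k<N. \<phi> k (map i [0..<k]) (i k) (x (\<pi> k)))"

definition outcome_prob ::
  "nat \<Rightarrow> (nat \<Rightarrow> nat) \<Rightarrow> (nat \<Rightarrow> nat) \<Rightarrow> (nat \<Rightarrow> nat list \<Rightarrow> nat \<Rightarrow> nat \<Rightarrow> complex) \<Rightarrow> ((nat \<Rightarrow> nat) \<Rightarrow> complex) \<Rightarrow> (nat \<Rightarrow> nat) \<Rightarrow> real" where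
  "outcome_prob N d \<pi> \<phi> \<psi> i = (cmod (braket (tidx N d) (outcome_vec N \<pi> \<phi> i) \<psi>))\<^sup>2"

definition shannon :: "'a set \<Rightarrow> ('a \<Rightarrow> real) \<Rightarrow> real" where
  "shannon A p = - (\<Sum>a\<in>A. if p a = 0 then 0 else p a * log 2 (p a))"

definition E_MB :: "nat \<Rightarrow> (nat \<Rightarrow> nat) \<Rightarrow> ((nat \<Rightarrow> nat) \<Rightarrow> complex) \<Rightarrow> ereal" where
  "E_MB N d \<psi> = (INF s\<in>{(\<pi>, \<phi>). adaptive_scheme N d \<pi> \<phi>}.
      ereal (shannon (outcomes N d (fst s)) (outcome_prob N d (fst s) (snd s) \<psi>)))"

definition omega_state ::
  "nat \<Rightarrow> (nat \<Rightarrow> nat) \<Rightarrow> (nat \<Rightarrow> nat) \<Rightarrow> (nat \<Rightarrow> nat list \<Rightarrow> nat \<Rightarrow> nat \<Rightarrow> complex) \<Rightarrow> ((nat \<Rightarrow> nat) \<Rightarrow> complex) \<Rightarrow> (nat \<Rightarrow> nat) \<Rightarrow> (nat \<Rightarrow> nat) \<Rightarrow> complex" where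
  "omega_state N d \<pi> \<phi> \<psi> x y =
     (\<Sum>i\<in>outcomes N d \<pi>. complex_of_real (outcome_prob N d \<pi> \<phi> \<psi> i) *
        outcome_vec N \<pi> \<phi> i x * cnj (outcome_vec N \<pi> \<phi> i y))"

end

theory Submission
  imports Defs "Jordan_Normal_Form.Determinant"
begin

(*
  Fix an adaptive local measurement scheme with product outcome vectors e_i and outcome
  probabilities p_i = |<e_i|psi>|^2.  The outcome vectors form an orthonormal basis of the
  whole space (two different outcome histories first differ at some step, where the same
  local basis is used, so the corresponding local factors are orthogonal).  Hence
  omega = sum_i p_i |e_i><e_i| is already a spectral decomposition of omega, and
    - <psi| log_2 omega |psi> = sum_i |<e_i|psi>|^2 (- log_2 p_i) = H(p).
  Since every |e_i><e_i| is a product of local rank-one projectors, omega is fully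
  separable, so E_R <= H(p) for every scheme, i.e. E_R <= E_MB.
*)

hide_const (open) Matrix.unit_vec


section \<open>Orthonormal families on a finite index set\<close>

definition orthonormal_family :: "'i set \<Rightarrow> 'k set \<Rightarrow> ('k \<Rightarrow> 'i \<Rightarrow> complex) \<Rightarrow> bool" where
  "orthonormal_family S K e \<longleftrightarrow>
     (\<forall>k\<in>K. \<forall>l\<in>K. braket S (e k) (e l) = (if k = l then 1 else 0))"

lemma orthonormal_basis_iff_family: "orthonormal_basis S v \<longleftrightarrow> orthonormal_family S S v"
  unfolding orthonormal_basis_def orthonormal_family_def ..

lemma braket_cnj: "cnj (braket S u w) = braket S w u"
  unfolding braket_def by (simp add: mult.commute)

lemma of_real_cmod_square: "complex_of_real ((cmod z)\<^sup>2) = cnj z * z"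
  by (metis complex_norm_square mult.commute)

text \<open>Completeness: an orthonormal family with as many members as the dimension satisfies
  sum_k |e_k><e_k| = 1.  In matrix terms, A B = 1 for square matrices implies B A = 1.\<close>
lemma orthonormal_family_complete:
  fixes e :: "'k \<Rightarrow> 'i \<Rightarrow> complex"
  assumes finK: "finite K" and finS: "finite S" and card: "card K = card S"
    and orth: "orthonormal_family S K e" and x: "x \<in> S" and y: "y \<in> S"
  shows "(\<Sum>k\<in>K. e k x * cnj (e k y)) = (if x = y then 1 else 0)"
proof -
  define n where "n = card S"
  obtain f where f: "bij_betw f {0..<n} K" using ex_bij_betw_nat_finite[OF finK] card n_def by metis
  obtain g where g: "bij_betw g {0..<n} S" using ex_bij_betw_nat_finite[OF finS] n_def by metis
  define A :: "complex mat" where "A = Matrix.mat n n (\<lambda>(a, b). cnj (e (f a) (g b)))"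
  define B :: "complex mat" where "B = Matrix.mat n n (\<lambda>(b, a). e (f a) (g b))"
  have AB: "A * B = 1\<^sub>m n"
  proof (rule eq_matI)
    fix a a' assume a: "a < dim_row (1\<^sub>m n)" and a': "a' < dim_col (1\<^sub>m n)"
    have "(A * B) $$ (a, a') = (\<Sum>b\<in>{0..<n}. cnj (e (f a) (g b)) * e (f a') (g b))"
      using a a' by (simp add: A_def B_def scalar_prod_def)
    also have "\<dots> = braket S (e (f a)) (e (f a'))"
      unfolding braket_def by (rule sum.reindex_bij_betw[OF g])
    also have "\<dots> = (if f a = f a' then 1 else 0)"
      using orth f a a' by (auto simp: orthonormal_family_def bij_betw_def)
    also have "\<dots> = 1\<^sub>m n $$ (a, a')"
      using f a a' by (auto simp: bij_betw_def inj_on_def)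
    finally show "(A * B) $$ (a, a') = 1\<^sub>m n $$ (a, a')" .
  qed (auto simp: A_def B_def)
  have BA: "B * A = 1\<^sub>m n"
    by (rule mat_mult_left_right_inverse[OF _ _ AB]) (auto simp: A_def B_def)
  obtain b where b: "b < n" "g b = x" using g x by (auto simp: bij_betw_def)
  obtain b' where b': "b' < n" "g b' = y" using g y by (auto simp: bij_betw_def)
  have "(\<Sum>k\<in>K. e k x * cnj (e k y)) = (\<Sum>a\<in>{0..<n}. e (f a) x * cnj (e (f a) y))"
    by (rule sum.reindex_bij_betw[OF f, symmetric])
  also have "\<dots> = (B * A) $$ (b, b')"
    using b b' by (simp add: A_def B_def scalar_prod_def)
  also have "\<dots> = (if x = y then 1 else 0)"
    using BA b b' g by (auto simp: bij_betw_def inj_on_def)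
  finally show ?thesis .
qed

definition sesq :: "'i set \<Rightarrow> ('i \<Rightarrow> complex) \<Rightarrow> ('i \<Rightarrow> 'i \<Rightarrow> complex) \<Rightarrow> ('i \<Rightarrow> complex) \<Rightarrow> complex" where
  "sesq S u M w = (\<Sum>x\<in>S. \<Sum>y\<in>S. cnj (u x) * M x y * w y)"

lemma sesq_cong:
  "(\<And>x y. x \<in> S \<Longrightarrow> y \<in> S \<Longrightarrow> M x y = M' x y) \<Longrightarrow> sesq S u M w = sesq S u M' w"
  unfolding sesq_def by (intro sum.cong refl) auto

lemma sesq_rank_one_sum:
  "sesq S u (\<lambda>x y. \<Sum>j\<in>J. c j * a j x * cnj (a j y)) w =
     (\<Sum>j\<in>J. c j * braket S u (a j) * braket S (a j) w)"
proof -
  have "sesq S u (\<lambda>x y. \<Sum>j\<in>J. c j * a j x * cnj (a j y)) w =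
     (\<Sum>x\<in>S. \<Sum>y\<in>S. \<Sum>j\<in>J. c j * (cnj (u x) * a j x) * (cnj (a j y) * w y))"
    unfolding sesq_def by (simp add: sum_distrib_left sum_distrib_right mult_ac)
  also have "\<dots> = (\<Sum>x\<in>S. \<Sum>j\<in>J. \<Sum>y\<in>S. c j * (cnj (u x) * a j x) * (cnj (a j y) * w y))"
    by (intro sum.cong refl) (rule sum.swap)
  also have "\<dots> = (\<Sum>j\<in>J. \<Sum>x\<in>S. \<Sum>y\<in>S. c j * (cnj (u x) * a j x) * (cnj (a j y) * w y))"
    by (rule sum.swap)
  also have "\<dots> = (\<Sum>j\<in>J. c j * braket S u (a j) * braket S (a j) w)"
    unfolding braket_def by (simp add: sum_distrib_left sum_distrib_right mult_ac)
  finally show ?thesis .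
qed

lemma sesq_identity: "finite S \<Longrightarrow> sesq S u (\<lambda>x y. if x = y then 1 else 0) w = braket S u w"
  unfolding sesq_def braket_def by (simp add: if_distrib if_distribR cong: if_cong)

lemma braket_expand:
  fixes e :: "'k \<Rightarrow> 'i \<Rightarrow> complex"
  assumes finK: "finite K" and finS: "finite S" and card: "card K = card S"
    and orth: "orthonormal_family S K e"
  shows "braket S u w = (\<Sum>k\<in>K. braket S u (e k) * braket S (e k) w)"
proof -
  have "braket S u w = sesq S u (\<lambda>x y. if x = y then 1 else 0) w"
    using sesq_identity[OF finS] by simp
  also have "\<dots> = sesq S u (\<lambda>x y. \<Sum>k\<in>K. 1 * e k x * cnj (e k y)) w"
    by (rule sesq_cong) (simp add: orthonormal_family_complete[OF assms])
  also have "\<dots> = (\<Sum>k\<in>K. braket S u (e k) * braket S (e k) w)"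
    using sesq_rank_one_sum[where c = "\<lambda>_. 1" and J = K and a = e] by simp
  finally show ?thesis .
qed

lemma parseval:
  fixes e :: "'k \<Rightarrow> 'i \<Rightarrow> complex"
  assumes "finite K" "finite S" "card K = card S" "orthonormal_family S K e"
  shows "(\<Sum>k\<in>K. (cmod (braket S (e k) \<psi>))\<^sup>2) = (\<Sum>x\<in>S. (cmod (\<psi> x))\<^sup>2)"
proof -
  have "complex_of_real (\<Sum>k\<in>K. (cmod (braket S (e k) \<psi>))\<^sup>2) =
      (\<Sum>k\<in>K. braket S \<psi> (e k) * braket S (e k) \<psi>)"
    by (simp only: of_real_sum of_real_cmod_square braket_cnj)
  also have "\<dots> = braket S \<psi> \<psi>" by (rule braket_expand[OF assms, symmetric])
  also have "\<dots> = complex_of_real (\<Sum>x\<in>S. (cmod (\<psi> x))\<^sup>2)"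
    unfolding braket_def by (simp only: of_real_sum of_real_cmod_square)
  finally show ?thesis by (simp only: of_real_eq_iff)
qed


section \<open>Spectral decompositions\<close>

definition spectral_decomp ::
  "'i set \<Rightarrow> ('i \<Rightarrow> 'i \<Rightarrow> complex) \<Rightarrow> 'k set \<Rightarrow> ('k \<Rightarrow> 'i \<Rightarrow> complex) \<Rightarrow> ('k \<Rightarrow> real) \<Rightarrow> bool" where
  "spectral_decomp S \<sigma> K e \<mu> \<longleftrightarrow>
     orthonormal_family S K e \<and>
     (\<forall>x\<in>S. \<forall>y\<in>S. \<sigma> x y = (\<Sum>k\<in>K. complex_of_real (\<mu> k) * e k x * cnj (e k y)))"

lemma spectral_decomp_eigen:
  assumes fin: "finite K" and dec: "spectral_decomp S \<sigma> K e \<mu>" and i: "i \<in> K"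
  shows "sesq S (e i) \<sigma> w = complex_of_real (\<mu> i) * braket S (e i) w"
proof -
  have "sesq S (e i) \<sigma> w =
      sesq S (e i) (\<lambda>x y. \<Sum>k\<in>K. complex_of_real (\<mu> k) * e k x * cnj (e k y)) w"
    using dec by (intro sesq_cong) (auto simp: spectral_decomp_def)
  also have "\<dots> = (\<Sum>k\<in>K. complex_of_real (\<mu> k) * braket S (e i) (e k) * braket S (e k) w)"
    by (rule sesq_rank_one_sum)
  also have "\<dots> = (\<Sum>k\<in>K. if k = i then complex_of_real (\<mu> i) * braket S (e i) w else 0)"
    using dec i by (intro sum.cong refl) (auto simp: spectral_decomp_def orthonormal_family_def)
  also have "\<dots> = complex_of_real (\<mu> i) * braket S (e i) w"
    using fin i by simp
  finally show ?thesis .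
qed

lemma spectral_decomp_hermitian:
  assumes dec: "spectral_decomp S \<sigma> K e \<mu>"
  shows "cnj (sesq S u \<sigma> w) = sesq S w \<sigma> u"
proof -
  have herm: "\<sigma> y x = cnj (\<sigma> x y)" if "x \<in> S" "y \<in> S" for x y
    using dec that by (simp add: spectral_decomp_def mult.commute mult.left_commute)
  have "cnj (sesq S u \<sigma> w) = (\<Sum>x\<in>S. \<Sum>y\<in>S. cnj (w y) * \<sigma> y x * u x)"
    unfolding sesq_def cnj_sum
  proof (intro sum.cong refl)
    fix x y assume "x \<in> S" "y \<in> S"
    then show "cnj (cnj (u x) * \<sigma> x y * w y) = cnj (w y) * \<sigma> y x * u x"
      using herm[of x y] by (simp add: mult_ac)
  qed
  also have "\<dots> = sesq S w \<sigma> u" unfolding sesq_def by (rule sum.swap)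
  finally show ?thesis .
qed

lemma spectral_decomp_overlap:
  assumes finK: "finite K" and finL: "finite L"
    and e: "spectral_decomp S \<sigma> K e \<mu>" and f: "spectral_decomp S \<sigma> L f \<nu>"
    and i: "i \<in> K" and j: "j \<in> L"
  shows "(\<mu> i - \<nu> j) * braket S (e i) (f j) = 0"
proof -
  have "complex_of_real (\<mu> i) * braket S (e i) (f j) = sesq S (e i) \<sigma> (f j)"
    by (rule spectral_decomp_eigen[OF finK e i, symmetric])
  also have "\<dots> = cnj (sesq S (f j) \<sigma> (e i))"
    by (rule spectral_decomp_hermitian[OF e, symmetric])
  also have "\<dots> = complex_of_real (\<nu> j) * braket S (e i) (f j)"
    by (simp add: spectral_decomp_eigen[OF finL f j] braket_cnj)
  finally show ?thesis by (simp add: algebra_simps)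
qed

text \<open>Applying g to the eigenvalues is consistent across decompositions:
  g(nu_j) <f_j|psi> = sum_i <f_j|e_i> g(mu_i) <e_i|psi>, since <f_j|e_i> = 0 unless nu_j = mu_i.\<close>
lemma spectral_coefficient_transfer:
  fixes g :: "real \<Rightarrow> real"
  assumes finS: "finite S" and finK: "finite K" and finL: "finite L" and cardK: "card K = card S"
    and e: "spectral_decomp S \<sigma> K e \<mu>" and f: "spectral_decomp S \<sigma> L f \<nu>" and j: "j \<in> L"
  shows "complex_of_real (g (\<nu> j)) * braket S (f j) \<psi> =
         (\<Sum>i\<in>K. braket S (f j) (e i) * (complex_of_real (g (\<mu> i)) * braket S (e i) \<psi>))"
proof -
  have eK: "orthonormal_family S K e" using e by (simp add: spectral_decomp_def)
  have "complex_of_real (g (\<nu> j)) * braket S (f j) \<psi> =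
      (\<Sum>i\<in>K. complex_of_real (g (\<nu> j)) * braket S (f j) (e i) * braket S (e i) \<psi>)"
    by (subst braket_expand[OF finK finS cardK eK]) (simp add: sum_distrib_left mult_ac)
  also have "\<dots> = (\<Sum>i\<in>K. braket S (f j) (e i) * (complex_of_real (g (\<mu> i)) * braket S (e i) \<psi>))"
  proof (rule sum.cong[OF refl])
    fix i assume i: "i \<in> K"
    have "braket S (f j) (e i) = 0 \<or> \<mu> i = \<nu> j"
      using spectral_decomp_overlap[OF finK finL e f i j] braket_cnj[of S "e i" "f j"] by auto
    thus "complex_of_real (g (\<nu> j)) * braket S (f j) (e i) * braket S (e i) \<psi> =
        braket S (f j) (e i) * (complex_of_real (g (\<mu> i)) * braket S (e i) \<psi>)"
      by auto
  qed
  finally show ?thesis .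
qed

text \<open>Functional calculus is independent of the decomposition: for two complete spectral
  decompositions of the same matrix, <psi| g(sigma) |psi> is the same.\<close>
lemma spectral_form_invariant:
  fixes g :: "real \<Rightarrow> real"
  assumes finS: "finite S" and finK: "finite K" and finL: "finite L"
    and cardK: "card K = card S" and cardL: "card L = card S"
    and e: "spectral_decomp S \<sigma> K e \<mu>" and f: "spectral_decomp S \<sigma> L f \<nu>"
  shows "(\<Sum>j\<in>L. (cmod (braket S (f j) \<psi>))\<^sup>2 * g (\<nu> j)) =
         (\<Sum>i\<in>K. (cmod (braket S (e i) \<psi>))\<^sup>2 * g (\<mu> i))"
proof -
  define a where "a j = braket S (f j) \<psi>" for j
  define b where "b i = braket S (e i) \<psi>" for i
  define G where "G i = complex_of_real (g (\<mu> i)) * b i" for i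
  have fL: "orthonormal_family S L f" using f by (simp add: spectral_decomp_def)
  have ga: "complex_of_real (g (\<nu> j)) * a j = (\<Sum>i\<in>K. braket S (f j) (e i) * G i)"
    if "j \<in> L" for j
    unfolding a_def G_def b_def by (rule spectral_coefficient_transfer[OF finS finK finL cardK e f that])
  have cb: "(\<Sum>j\<in>L. cnj (a j) * braket S (f j) (e i)) = cnj (b i)" for i
    unfolding a_def b_def braket_cnj by (rule braket_expand[OF finL finS cardL fL, symmetric])
  have "complex_of_real (\<Sum>j\<in>L. (cmod (a j))\<^sup>2 * g (\<nu> j)) =
      (\<Sum>j\<in>L. cnj (a j) * (complex_of_real (g (\<nu> j)) * a j))"
    by (simp only: of_real_sum of_real_mult of_real_cmod_square) (simp add: mult_ac)
  also have "\<dots> = (\<Sum>j\<in>L. \<Sum>i\<in>K. cnj (a j) * braket S (f j) (e i) * G i)"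
  proof (intro sum.cong refl)
    fix j assume "j \<in> L"
    show "cnj (a j) * (complex_of_real (g (\<nu> j)) * a j) =
        (\<Sum>i\<in>K. cnj (a j) * braket S (f j) (e i) * G i)"
      by (simp add: ga[OF \<open>j \<in> L\<close>] sum_distrib_left mult.assoc)
  qed
  also have "\<dots> = (\<Sum>i\<in>K. cnj (b i) * G i)"
    by (subst sum.swap) (simp add: sum_distrib_right[symmetric] cb)
  also have "\<dots> = complex_of_real (\<Sum>i\<in>K. (cmod (b i))\<^sup>2 * g (\<mu> i))"
    unfolding G_def by (simp only: of_real_sum of_real_mult of_real_cmod_square) (simp add: mult_ac)
  finally show ?thesis unfolding a_def b_def by (simp only: of_real_eq_iff)
qed

text \<open>psi has a component along a non-positive eigenvalue iff the corresponding weighted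
  sum of squared overlaps is nonzero; this makes the support condition invariant.\<close>
lemma nonpos_component_iff:
  assumes "finite K"
  shows "(\<exists>k\<in>K. \<mu> k \<le> 0 \<and> z k \<noteq> 0) \<longleftrightarrow>
         (\<Sum>k\<in>K. (cmod (z k))\<^sup>2 * (if \<mu> k \<le> 0 then 1 else 0)) \<noteq> (0::real)"
  using assms by (subst sum_nonneg_eq_0_iff) auto

lemma sum_positive_weights:
  assumes "finite K"
  shows "(\<Sum>k\<in>{k\<in>K. \<mu> k > 0}. c k * (- log 2 (\<mu> k))) =
         (\<Sum>k\<in>K. c k * (if \<mu> k > 0 then - log 2 (\<mu> k) else 0))"
  using assms by (simp add: sum.inter_filter if_distrib cong: if_cong)

text \<open>neg_log_qf is defined through an arbitrarily chosen spectral decomposition, but it can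
  be computed from any complete spectral decomposition.\<close>
lemma neg_log_qf_spectral:
  assumes finS: "finite S" and finK: "finite K" and card: "card K = card S"
    and e: "spectral_decomp S \<sigma> K e \<mu>"
  shows "neg_log_qf S \<sigma> \<psi> =
    (if \<exists>k\<in>K. \<mu> k \<le> 0 \<and> braket S (e k) \<psi> \<noteq> 0 then \<infinity>
     else ereal (\<Sum>k\<in>{k\<in>K. \<mu> k > 0}. (cmod (braket S (e k) \<psi>))\<^sup>2 * (- log 2 (\<mu> k))))"
proof -
  define P where "P = (\<lambda>(v, lam). spectral_decomp S \<sigma> S v lam)"
  have "\<exists>z. P z"
  proof -
    obtain \<tau> where \<tau>: "bij_betw \<tau> S K"
      using finite_same_card_bij[OF finS finK card[symmetric]] by blast
    have "orthonormal_family S S (\<lambda>x. e (\<tau> x))"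
      using e \<tau> by (auto simp: spectral_decomp_def orthonormal_family_def bij_betw_def inj_on_def)
    moreover have "\<sigma> x y = (\<Sum>k\<in>S. complex_of_real (\<mu> (\<tau> k)) * e (\<tau> k) x * cnj (e (\<tau> k) y))"
      if "x \<in> S" "y \<in> S" for x y
      using e that sum.reindex_bij_betw[OF \<tau>, of "\<lambda>k. complex_of_real (\<mu> k) * e k x * cnj (e k y)"]
      by (simp add: spectral_decomp_def)
    ultimately have "spectral_decomp S \<sigma> S (\<lambda>x. e (\<tau> x)) (\<lambda>x. \<mu> (\<tau> x))"
      by (simp add: spectral_decomp_def)
    thus ?thesis unfolding P_def by auto
  qed
  moreover obtain v lam where vl: "(SOME z. P z) = (v, lam)" by (cases "SOME z. P z") auto
  ultimately have v: "spectral_decomp S \<sigma> S v lam" using someI_ex[of P] by (auto simp: P_def)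
  have val: "neg_log_qf S \<sigma> \<psi> =
    (if \<exists>k\<in>S. lam k \<le> 0 \<and> braket S (v k) \<psi> \<noteq> 0 then \<infinity>
     else ereal (\<Sum>k\<in>{k\<in>S. lam k > 0}. (cmod (braket S (v k) \<psi>))\<^sup>2 * (- log 2 (lam k))))"
    using vl unfolding neg_log_qf_def P_def spectral_decomp_def orthonormal_basis_iff_family
    by simp
  note invariant = spectral_form_invariant[OF finS finK finS card refl e v]
  have "(\<exists>k\<in>S. lam k \<le> 0 \<and> braket S (v k) \<psi> \<noteq> 0) \<longleftrightarrow>
        (\<exists>k\<in>K. \<mu> k \<le> 0 \<and> braket S (e k) \<psi> \<noteq> 0)"
    unfolding nonpos_component_iff[OF finS] nonpos_component_iff[OF finK]
    using invariant[where g = "\<lambda>t. if t \<le> 0 then 1 else 0"] by simp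
  moreover have "(\<Sum>k\<in>{k\<in>S. lam k > 0}. (cmod (braket S (v k) \<psi>))\<^sup>2 * (- log 2 (lam k))) =
        (\<Sum>k\<in>{k\<in>K. \<mu> k > 0}. (cmod (braket S (e k) \<psi>))\<^sup>2 * (- log 2 (\<mu> k)))"
    unfolding sum_positive_weights[OF finS] sum_positive_weights[OF finK]
    using invariant[where g = "\<lambda>t. if t > 0 then - log 2 t else 0"] by simp
  ultimately show ?thesis unfolding val by simp
qed


section \<open>Outcome vectors of adaptive schemes\<close>

lemma finite_tidx: "finite (tidx N d)"
  unfolding tidx_def by (intro finite_PiE) auto

lemma finite_outcomes: "finite (outcomes N d \<pi>)"
  unfolding outcomes_def by (intro finite_PiE) auto

lemma card_outcomes:
  assumes bij: "bij_betw \<pi> {..<N} {..<N}"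
  shows "card (outcomes N d \<pi>) = card (tidx N d)"
proof -
  have "card (outcomes N d \<pi>) = (\<Prod>k<N. d (\<pi> k))" unfolding outcomes_def by (simp add: card_PiE)
  also have "\<dots> = (\<Prod>j<N. d j)" by (rule prod.reindex_bij_betw[OF bij])
  also have "\<dots> = card (tidx N d)" unfolding tidx_def by (simp add: card_PiE)
  finally show ?thesis .
qed

lemma prod_reindex_order:
  fixes F :: "nat \<Rightarrow> nat \<Rightarrow> 'a :: comm_monoid_mult"
  assumes bij: "bij_betw \<pi> {..<N} {..<N}"
  shows "(\<Prod>k<N. F k (\<pi> k)) = (\<Prod>j<N. F (inv_into {..<N} \<pi> j) j)"
proof -
  have "(\<Prod>k<N. F k (\<pi> k)) = (\<Prod>k<N. (\<lambda>j. F (inv_into {..<N} \<pi> j) j) (\<pi> k))"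
    using bij by (intro prod.cong refl) (simp add: bij_betw_def)
  also have "\<dots> = (\<Prod>j<N. F (inv_into {..<N} \<pi> j) j)" by (rule prod.reindex_bij_betw[OF bij])
  finally show ?thesis .
qed

lemma sum_tidx_prod:
  fixes F :: "nat \<Rightarrow> nat \<Rightarrow> complex"
  assumes bij: "bij_betw \<pi> {..<N} {..<N}"
  shows "(\<Sum>x\<in>tidx N d. \<Prod>k<N. F k (x (\<pi> k))) = (\<Prod>k<N. \<Sum>a<d (\<pi> k). F k a)"
proof -
  define r where "r = inv_into {..<N} \<pi>"
  have "(\<Sum>x\<in>tidx N d. \<Prod>k<N. F k (x (\<pi> k))) = (\<Sum>x\<in>tidx N d. \<Prod>j<N. F (r j) (x j))"
    unfolding r_def using prod_reindex_order[OF bij, of "\<lambda>k j. F k (_ j)"] by simp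
  also have "\<dots> = (\<Prod>j<N. \<Sum>a<d j. F (r j) a)"
    unfolding tidx_def by (rule prod_sum_PiE[symmetric]) auto
  also have "\<dots> = (\<Prod>k<N. \<Sum>a<d (\<pi> k). F k a)"
    unfolding r_def using prod_reindex_order[OF bij, of "\<lambda>k j. \<Sum>a<d j. F k a"] by simp
  finally show ?thesis .
qed

lemma braket_outcome_vec:
  assumes bij: "bij_betw \<pi> {..<N} {..<N}"
  shows "braket (tidx N d) (outcome_vec N \<pi> \<phi> i) (outcome_vec N \<pi> \<phi> j) =
    (\<Prod>k<N. braket {..<d (\<pi> k)} (\<phi> k (map i [0..<k]) (i k)) (\<phi> k (map j [0..<k]) (j k)))"
  unfolding braket_def outcome_vec_def cnj_prod prod.distrib[symmetric]
  by (rule sum_tidx_prod[OF bij])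

lemma scheme_local_onb:
  assumes "adaptive_scheme N d \<pi> \<phi>" "i \<in> outcomes N d \<pi>" "k < N"
  shows "orthonormal_basis {..<d (\<pi> k)} (\<phi> k (map i [0..<k]))"
proof -
  have "length (map i [0..<k]) = k \<and> (\<forall>m<k. map i [0..<k] ! m < d (\<pi> m))"
    using assms(2,3) by (auto simp: outcomes_def PiE_iff)
  thus ?thesis using assms(1,3) unfolding adaptive_scheme_def by blast
qed

lemma first_difference:
  fixes i j :: "nat \<Rightarrow> 'a"
  assumes i: "i \<in> PiE {..<N} A" and j: "j \<in> PiE {..<N} A" and ne: "i \<noteq> j"
  obtains m where "m < N" "i m \<noteq> j m" "\<And>m'. m' < m \<Longrightarrow> i m' = j m'"
proof -
  have ex: "\<exists>k. k < N \<and> i k \<noteq> j k"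
    using i j ne by (metis PiE_ext lessThan_iff)
  define m where "m = (LEAST k. k < N \<and> i k \<noteq> j k)"
  have "m < N" "i m \<noteq> j m"
    using LeastI_ex[of "\<lambda>k. k < N \<and> i k \<noteq> j k"] ex unfolding m_def by auto
  moreover have "i m' = j m'" if "m' < m" for m'
    using not_less_Least[of m' "\<lambda>k. k < N \<and> i k \<noteq> j k"] that \<open>m < N\<close> unfolding m_def by auto
  ultimately show ?thesis using that by blast
qed

text \<open>The outcome vectors of an adaptive scheme are orthonormal: at the first step where two
  outcome tuples differ, both histories coincide, so the same local basis is used.\<close>
lemma outcome_vec_orthonormal:
  assumes A: "adaptive_scheme N d \<pi> \<phi>"
  shows "orthonormal_family (tidx N d) (outcomes N d \<pi>) (outcome_vec N \<pi> \<phi>)"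
  unfolding orthonormal_family_def
proof (intro ballI)
  fix i j assume i: "i \<in> outcomes N d \<pi>" and j: "j \<in> outcomes N d \<pi>"
  have bij: "bij_betw \<pi> {..<N} {..<N}" using A unfolding adaptive_scheme_def by blast
  have range: "i k < d (\<pi> k)" "j k < d (\<pi> k)" if "k < N" for k
    using i j that by (auto simp: outcomes_def PiE_iff)
  show "braket (tidx N d) (outcome_vec N \<pi> \<phi> i) (outcome_vec N \<pi> \<phi> j) = (if i = j then 1 else 0)"
  proof (cases "i = j")
    case True
    thus ?thesis
      using scheme_local_onb[OF A i] range unfolding braket_outcome_vec[OF bij]
      by (simp add: orthonormal_basis_def)
  next
    case False
    then obtain m where m: "m < N" "i m \<noteq> j m" and before: "\<And>m'. m' < m \<Longrightarrow> i m' = j m'"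
      using first_difference i j unfolding outcomes_def by metis
    have history: "map i [0..<m] = map j [0..<m]" using before by simp
    have "braket {..<d (\<pi> m)} (\<phi> m (map i [0..<m]) (i m)) (\<phi> m (map j [0..<m]) (j m)) = 0"
      unfolding history[symmetric]
      using scheme_local_onb[OF A i m(1)] range[OF m(1)] m(2) by (simp add: orthonormal_basis_def)
    hence "(\<Prod>k<N. braket {..<d (\<pi> k)} (\<phi> k (map i [0..<k]) (i k)) (\<phi> k (map j [0..<k]) (j k))) = 0"
      using m(1) by (intro prod_zero) auto
    thus ?thesis using False unfolding braket_outcome_vec[OF bij] by simp
  qed
qed

lemma outcome_prob_sum:
  assumes A: "adaptive_scheme N d \<pi> \<phi>" and u: "unit_vec (tidx N d) \<psi>"
  shows "(\<Sum>i\<in>outcomes N d \<pi>. outcome_prob N d \<pi> \<phi> \<psi> i) = 1"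
proof -
  have bij: "bij_betw \<pi> {..<N} {..<N}" using A unfolding adaptive_scheme_def by blast
  have "(\<Sum>i\<in>outcomes N d \<pi>. outcome_prob N d \<pi> \<phi> \<psi> i) = (\<Sum>x\<in>tidx N d. (cmod (\<psi> x))\<^sup>2)"
    unfolding outcome_prob_def
    by (rule parseval[OF finite_outcomes finite_tidx card_outcomes[OF bij] outcome_vec_orthonormal[OF A]])
  with u show ?thesis by (simp add: Defs.unit_vec_def)
qed


section \<open>The separable state omega\<close>

lemma rank_one_density:
  assumes norm: "(\<Sum>a\<in>A. cnj (f a) * f a) = 1"
  shows "density_matrix A (\<lambda>a b. f a * cnj (f b))"
  unfolding density_matrix_def
proof (intro conjI allI ballI)
  fix v :: "'a \<Rightarrow> complex"
  define c where "c = (\<Sum>x\<in>A. cnj (v x) * f x)"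
  have "(\<Sum>x\<in>A. \<Sum>y\<in>A. cnj (v x) * (f x * cnj (f y)) * v y) = c * cnj c"
    unfolding c_def cnj_sum sum_product by (intro sum.cong refl) (simp add: mult_ac)
  also have "\<dots> = complex_of_real ((cmod c)\<^sup>2)" by (rule complex_norm_square[symmetric])
  finally show "0 \<le> Re (\<Sum>x\<in>A. \<Sum>y\<in>A. cnj (v x) * (f x * cnj (f y)) * v y)" by simp
qed (use norm in \<open>simp_all add: mult.commute\<close>)

text \<open>A convex combination over a finite set of products of local density matrices is fully
  separable (the definition asks for an enumeration by natural numbers).\<close>
lemma fully_separable_mixture:
  assumes fin: "finite Ob" and w: "\<forall>i\<in>Ob. w i \<ge> 0" "(\<Sum>i\<in>Ob. w i) = 1"
    and loc: "\<forall>i\<in>Ob. \<forall>j<N. density_matrix {..<d j} (\<rho> i j)"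
    and \<sigma>: "\<forall>x\<in>tidx N d. \<forall>y\<in>tidx N d.
               \<sigma> x y = (\<Sum>i\<in>Ob. complex_of_real (w i) * (\<Prod>j<N. \<rho> i j (x j) (y j)))"
  shows "fully_separable N d \<sigma>"
proof -
  obtain enum where en: "bij_betw enum {..<card Ob} Ob"
    using ex_bij_betw_nat_finite[OF fin] by (auto simp: atLeast0LessThan)
  have "\<forall>k<card Ob. enum k \<in> Ob" using en by (auto simp: bij_betw_def)
  moreover have "(\<Sum>k<card Ob. w (enum k)) = 1"
    using w(2) sum.reindex_bij_betw[OF en, of w] by simp
  moreover have "\<sigma> x y = (\<Sum>k<card Ob. complex_of_real (w (enum k)) * (\<Prod>j<N. \<rho> (enum k) j (x j) (y j)))"
    if "x \<in> tidx N d" "y \<in> tidx N d" for x y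
    using \<sigma> that sum.reindex_bij_betw[OF en, of "\<lambda>i. complex_of_real (w i) * (\<Prod>j<N. \<rho> i j (x j) (y j))"]
    by simp
  ultimately show ?thesis
    unfolding fully_separable_def using w(1) loc
    by (intro exI[of _ "card Ob"] exI[of _ "\<lambda>k. w (enum k)"] exI[of _ "\<lambda>k. \<rho> (enum k)"]) auto
qed

definition party_vec ::
  "nat \<Rightarrow> (nat \<Rightarrow> nat) \<Rightarrow> (nat \<Rightarrow> nat list \<Rightarrow> nat \<Rightarrow> nat \<Rightarrow> complex) \<Rightarrow> (nat \<Rightarrow> nat) \<Rightarrow> nat \<Rightarrow> nat \<Rightarrow> complex" where
  "party_vec N \<pi> \<phi> i j = (let k = inv_into {..<N} \<pi> j in \<phi> k (map i [0..<k]) (i k))"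

lemma outcome_vec_party:
  assumes "bij_betw \<pi> {..<N} {..<N}"
  shows "outcome_vec N \<pi> \<phi> i x = (\<Prod>j<N. party_vec N \<pi> \<phi> i j (x j))"
  unfolding outcome_vec_def party_vec_def Let_def
  using prod_reindex_order[OF assms, of "\<lambda>k j. \<phi> k (map i [0..<k]) (i k) (x j)"] .

lemma party_vec_normalized:
  assumes A: "adaptive_scheme N d \<pi> \<phi>" and i: "i \<in> outcomes N d \<pi>" and j: "j < N"
  shows "(\<Sum>a<d j. cnj (party_vec N \<pi> \<phi> i j a) * party_vec N \<pi> \<phi> i j a) = 1"
proof -
  define k where "k = inv_into {..<N} \<pi> j"
  have bij: "bij_betw \<pi> {..<N} {..<N}" using A unfolding adaptive_scheme_def by blast
  have j_range: "j \<in> \<pi> ` {..<N}" using bij j by (simp add: bij_betw_def)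
  have k: "k < N" "\<pi> k = j"
    unfolding k_def using inv_into_into[OF j_range] f_inv_into_f[OF j_range] by auto
  have "i k < d (\<pi> k)" using i k(1) by (auto simp: outcomes_def PiE_iff)
  thus ?thesis
    using scheme_local_onb[OF A i k(1)] k(2)
    unfolding party_vec_def Let_def k_def[symmetric] by (auto simp: orthonormal_basis_def braket_def)
qed

lemma omega_fully_separable:
  assumes A: "adaptive_scheme N d \<pi> \<phi>" and u: "unit_vec (tidx N d) \<psi>"
  shows "fully_separable N d (omega_state N d \<pi> \<phi> \<psi>)"
proof (rule fully_separable_mixture[OF finite_outcomes])
  have bij: "bij_betw \<pi> {..<N} {..<N}" using A unfolding adaptive_scheme_def by blast
  show "\<forall>x\<in>tidx N d. \<forall>y\<in>tidx N d. omega_state N d \<pi> \<phi> \<psi> x y =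
     (\<Sum>i\<in>outcomes N d \<pi>. complex_of_real (outcome_prob N d \<pi> \<phi> \<psi> i) *
        (\<Prod>j<N. party_vec N \<pi> \<phi> i j (x j) * cnj (party_vec N \<pi> \<phi> i j (y j))))"
    unfolding omega_state_def outcome_vec_party[OF bij] prod.distrib cnj_prod
    by (simp add: mult.assoc)
  show "\<forall>i\<in>outcomes N d \<pi>. \<forall>j<N.
      density_matrix {..<d j} (\<lambda>a b. party_vec N \<pi> \<phi> i j a * cnj (party_vec N \<pi> \<phi> i j b))"
    using rank_one_density party_vec_normalized[OF A] by blast
qed (use outcome_prob_sum[OF assms] in \<open>auto simp: outcome_prob_def\<close>)

lemma shannon_positive_part:
  assumes "finite A" and "\<And>a. a \<in> A \<Longrightarrow> p a \<ge> 0"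
  shows "shannon A p = (\<Sum>a\<in>{a\<in>A. p a > 0}. p a * (- log 2 (p a)))"
  unfolding shannon_def sum_negf[symmetric] sum.inter_filter[OF assms(1)]
  using assms(2) by (intro sum.cong refl) (auto simp: order_le_less)

text \<open>- <psi| log_2 omega |psi> = H(p): the outcome vectors diagonalise omega, with
  eigenvalues the outcome probabilities themselves.\<close>
lemma omega_neg_log_qf:
  assumes A: "adaptive_scheme N d \<pi> \<phi>"
  shows "neg_log_qf (tidx N d) (omega_state N d \<pi> \<phi> \<psi>) \<psi> =
          ereal (shannon (outcomes N d \<pi>) (outcome_prob N d \<pi> \<phi> \<psi>))"
proof -
  have bij: "bij_betw \<pi> {..<N} {..<N}" using A unfolding adaptive_scheme_def by blast
  define p where "p = outcome_prob N d \<pi> \<phi> \<psi>"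
  have p: "p i = (cmod (braket (tidx N d) (outcome_vec N \<pi> \<phi> i) \<psi>))\<^sup>2" for i
    unfolding p_def outcome_prob_def ..
  have "spectral_decomp (tidx N d) (omega_state N d \<pi> \<phi> \<psi>) (outcomes N d \<pi>) (outcome_vec N \<pi> \<phi>) p"
    unfolding spectral_decomp_def omega_state_def p_def using outcome_vec_orthonormal[OF A] by simp
  note spectral = neg_log_qf_spectral[OF finite_tidx finite_outcomes card_outcomes[OF bij] this]
  text \<open>A vanishing probability means a vanishing overlap, so psi lies in the support.\<close>
  have "\<not> (\<exists>i\<in>outcomes N d \<pi>. p i \<le> 0 \<and> braket (tidx N d) (outcome_vec N \<pi> \<phi> i) \<psi> \<noteq> 0)"
    by (simp add: p)
  moreover have "shannon (outcomes N d \<pi>) p = (\<Sum>i\<in>{i\<in>outcomes N d \<pi>. p i > 0}. p i * (- log 2 (p i)))"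
    by (rule shannon_positive_part[OF finite_outcomes]) (simp add: p)
  ultimately show ?thesis
    unfolding spectral p_def[symmetric] by (simp add: p[symmetric])
qed


theorem mainTheorem3:
  fixes N :: nat and d :: "nat \<Rightarrow> nat" and \<psi> :: "(nat \<Rightarrow> nat) \<Rightarrow> complex"
  assumes "unit_vec (tidx N d) \<psi>"
  shows "E_MB N d \<psi> \<ge> E_R N d \<psi> \<and>
    (\<forall>\<pi> \<phi>. adaptive_scheme N d \<pi> \<phi> \<longrightarrow>
        fully_separable N d (omega_state N d \<pi> \<phi> \<psi>) \<and>
        neg_log_qf (tidx N d) (omega_state N d \<pi> \<phi> \<psi>) \<psi> =
          ereal (shannon (outcomes N d \<pi>) (outcome_prob N d \<pi> \<phi> \<psi>)))"
proof -
  have omega: "fully_separable N d (omega_state N d \<pi> \<phi> \<psi>) \<and>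
        neg_log_qf (tidx N d) (omega_state N d \<pi> \<phi> \<psi>) \<psi> =
          ereal (shannon (outcomes N d \<pi>) (outcome_prob N d \<pi> \<phi> \<psi>))"
    if "adaptive_scheme N d \<pi> \<phi>" for \<pi> \<phi>
    using omega_fully_separable[OF that assms] omega_neg_log_qf[OF that] by blast
  text \<open>Each scheme yields a separable state witnessing E_R <= H(p).\<close>
  have "E_R N d \<psi> \<le> E_MB N d \<psi>"
    unfolding E_MB_def
  proof (rule INF_greatest, clarsimp)
    fix \<pi> \<phi> assume "adaptive_scheme N d \<pi> \<phi>"
    with omega show "E_R N d \<psi> \<le> ereal (shannon (outcomes N d \<pi>) (outcome_prob N d \<pi> \<phi> \<psi>))"
      unfolding E_R_def by (metis (mono_tags) INF_lower mem_Collect_eq)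
  qed
  with omega show ?thesis by blast
qed

end
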